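(* Consider regression data $\boldsymbol Z$, an $n\times(p+1)$ matrix whose $i$-th row is $(x_{i1},\ldots,x_{ip},y_i)$, and let $\boldsymbol X$ be the $n\times(p+1)$ design matrix with rows $(1,\boldsymbol x_i^{\top})$, $\boldsymbol x_i=(x_{i1},\ldots,x_{ip})^\top$, and $\boldsymbol y=(y_1,\ldots,y_n)^\top$. Let $\widehat{\boldsymbol\gamma}$ be a regression estimator, assigning to every such dataset a vector $\widehat{\boldsymbol\gamma}=(\hat\alpha,\hat\beta_1,\ldots,\hat\beta_p)^\top\in\mathbb R^{p+1}$, satisfying: if $y_i=(1,\boldsymbol x_i^{\top})\boldsymbol\gamma_0$ for all $i=1,\ldots,n$ for some $\boldsymbol\gamma_0\in\mathbb R^{p+1}$, and the rows of $\boldsymbol X$ do not lie in a lower-dimensional subspace, then $\widehat{\boldsymbol\gamma}=\boldsymbol\gamma_0$. Then for any dataset $\boldsymbol Z$, $$\varepsilon^*_n(\widehat{\boldsymbol\gamma},\boldsymbol Z)\leqslant\left\lceil\frac{n-1}{p+1}\right\rceil\Big/n .$$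
   Context: For an integer $m\ge0$, $\boldsymbol Z^m$ denotes any matrix obtained from $\boldsymbol Z$ by replacing at most $m$ cells in each column of $\boldsymbol Z$ (covariate columns and the response column) by arbitrary real values. The finite-sample cellwise breakdown value of $\widehat{\boldsymbol\gamma}$ at $\boldsymbol Z$ is $\varepsilon^*_n(\widehat{\boldsymbol\gamma},\boldsymbol Z)=\min\{\tfrac{m}{n}:\ \sup_{\boldsymbol Z^m}\|\widehat{\boldsymbol\gamma}(\boldsymbol Z^m)-\widehat{\boldsymbol\gamma}(\boldsymbol Z)\|=\infty\}$. *)

theory Defs
  imports Complex_Main
begin

text \<open>Regression data with n observations and p covariates is represented as
  Z :: nat => nat => real, where for i < n:
  Z i j (j < p) is the covariate x_{i,j+1}, and Z i p is the response y_i.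
  Entries outside the range i < n, j <= p are irrelevant junk.
  A coefficient vector gamma = (alpha, beta_1, ..., beta_p) is a function
  nat => real with gamma 0 = alpha and gamma (j+1) = beta_{j+1}, on indices 0..p.
  A regression estimator is a map from datasets to coefficient vectors.\<close>

definition design :: "nat \<Rightarrow> (nat \<Rightarrow> nat \<Rightarrow> real) \<Rightarrow> nat \<Rightarrow> nat \<Rightarrow> real" where
  "design p Z i k = (if k = 0 then 1 else Z i (k - 1))"

definition rows_in_proper_subspace :: "nat \<Rightarrow> nat \<Rightarrow> (nat \<Rightarrow> nat \<Rightarrow> real) \<Rightarrow> bool" where
  "rows_in_proper_subspace n p Z \<longleftrightarrow>
     (\<exists>v :: nat \<Rightarrow> real. (\<exists>k\<le>p. v k \<noteq> 0) \<and>
        (\<forall>i<n. (\<Sum>k\<le>p. design p Z i k * v k) = 0))"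

definition exact_fit :: "nat \<Rightarrow> nat \<Rightarrow> (nat \<Rightarrow> nat \<Rightarrow> real) \<Rightarrow> (nat \<Rightarrow> real) \<Rightarrow> bool" where
  "exact_fit n p Z g \<longleftrightarrow> (\<forall>i<n. Z i p = (\<Sum>k\<le>p. design p Z i k * g k))"

definition exact_fit_property ::
  "nat \<Rightarrow> nat \<Rightarrow> ((nat \<Rightarrow> nat \<Rightarrow> real) \<Rightarrow> nat \<Rightarrow> real) \<Rightarrow> bool" where
  "exact_fit_property n p est \<longleftrightarrow>
     (\<forall>Z g. exact_fit n p Z g \<and> \<not> rows_in_proper_subspace n p Z \<longrightarrow>
        (\<forall>k\<le>p. est Z k = g k))"

definition cellwise_contaminated ::
  "nat \<Rightarrow> nat \<Rightarrow> nat \<Rightarrow> (nat \<Rightarrow> nat \<Rightarrow> real) \<Rightarrow> (nat \<Rightarrow> nat \<Rightarrow> real) \<Rightarrow> bool" where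
  "cellwise_contaminated n p m Z Z' \<longleftrightarrow>
     (\<forall>i j. (n \<le> i \<or> p < j) \<longrightarrow> Z' i j = Z i j) \<and>
     (\<forall>j\<le>p. card {i. i < n \<and> Z' i j \<noteq> Z i j} \<le> m)"

definition coef_dist :: "nat \<Rightarrow> (nat \<Rightarrow> real) \<Rightarrow> (nat \<Rightarrow> real) \<Rightarrow> real" where
  "coef_dist p g h = sqrt (\<Sum>k\<le>p. (g k - h k)^2)"

definition cellwise_breaks ::
  "nat \<Rightarrow> nat \<Rightarrow> ((nat \<Rightarrow> nat \<Rightarrow> real) \<Rightarrow> nat \<Rightarrow> real) \<Rightarrow> (nat \<Rightarrow> nat \<Rightarrow> real) \<Rightarrow> nat \<Rightarrow> bool" where
  "cellwise_breaks n p est Z m \<longleftrightarrow>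
     (\<forall>B::real. \<exists>Z'. cellwise_contaminated n p m Z Z' \<and> coef_dist p (est Z') (est Z) > B)"

definition cellwise_breakdown ::
  "nat \<Rightarrow> nat \<Rightarrow> ((nat \<Rightarrow> nat \<Rightarrow> real) \<Rightarrow> nat \<Rightarrow> real) \<Rightarrow> (nat \<Rightarrow> nat \<Rightarrow> real) \<Rightarrow> real" where
  "cellwise_breakdown n p est Z = real (LEAST m. cellwise_breaks n p est Z m) / real n"

end

(*
  A budget of m = ceil((n-1)/(p+1)) cells in each of the p+1 columns allows one changed cell in
  each of the n-1 rows other than row 0. Fix a hyperplane through row 0 with an arbitrary slope t
  on the first covariate. A row off the hyperplane is moved onto it by changing a single cell, its
  response or a covariate with nonzero coefficient, solved from the fitting equation. By the
  exact-fit property the estimate on the contaminated data then has slope t, which is unbounded in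
  t, provided the contaminated design is nondegenerate.

  For nondegeneracy the other slopes are eta, eta^2, ..., eta^r, 0, ..., 0 with eta tiny, and every
  covariate q gets a probe row whose difference to row 0 is dominated by its q-th entry. For q <= r
  this is a row deviating from row 0 in the response or in a covariate before q, refitted in
  covariate q: its new entry is its residual divided by eta^q, and the leading nonzero term of that
  residual outweighs the rest. For q > r it is a row agreeing with row 0 in the response and the
  first r+1 covariates, whose q-th covariate (coefficient 0) is moved far out at no cost for the
  fit. Taking r maximal such that enough deviating rows exist also makes the per-column budget
  suffice. The probe rows form a diagonally dominant matrix, so the design has full rank.
*)

theory Submission
  imports Defs
begin

section \<open>Exact fits and nondegenerate designs\<close>

lemma coef_dist_ge_component:
  assumes "k \<le> p"
  shows "\<bar>g k - h k\<bar> \<le> coef_dist p g h"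
proof -
  have "(g k - h k)\<^sup>2 \<le> (\<Sum>j\<le>p. (g j - h j)\<^sup>2)"
    by (rule member_le_sum) (use assms in auto)
  then show ?thesis
    unfolding coef_dist_def by (metis real_sqrt_abs real_sqrt_le_mono)
qed

lemma cellwise_contaminatedI:
  assumes "\<And>i j. Z' i j \<noteq> Z i j \<Longrightarrow> i \<in> S j \<and> j \<le> p"
    and "\<And>j. S j \<subseteq> {..<n}" and "\<And>j. card (S j) \<le> m"
  shows "cellwise_contaminated n p m Z Z'"
  unfolding cellwise_contaminated_def
proof (intro conjI allI impI)
  fix i j assume outside: "n \<le> i \<or> p < j"
  show "Z' i j = Z i j"
  proof (rule ccontr)
    assume "Z' i j \<noteq> Z i j"
    then have "i \<in> S j" "j \<le> p" using assms(1) by auto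
    then show False using assms(2)[of j] outside by auto
  qed
next
  fix j
  have "{i. i < n \<and> Z' i j \<noteq> Z i j} \<subseteq> S j" using assms(1) by blast
  then have "card {i. i < n \<and> Z' i j \<noteq> Z i j} \<le> card (S j)"
    using assms(2)[of j] by (intro card_mono) (auto intro: finite_subset)
  then show "card {i. i < n \<and> Z' i j \<noteq> Z i j} \<le> m" using assms(3)[of j] by linarith
qed

lemma design_sum: "(\<Sum>k\<le>p. design p Z i k * g k) = g 0 + (\<Sum>k<p. Z i k * g (Suc k))"
  by (simp add: sum.atMost_shift design_def)

lemma exact_fit_cong_zero_coefficients:
  assumes fit: "exact_fit n p Z g"
    and same: "\<And>i k. i < n \<Longrightarrow> k \<le> p \<Longrightarrow> Z' i k \<noteq> Z i k \<Longrightarrow> k < p \<and> g (Suc k) = 0"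
  shows "exact_fit n p Z' g"
  unfolding exact_fit_def design_sum
proof (intro allI impI)
  fix i assume i: "i < n"
  have "Z' i p = Z i p" using same[OF i] by blast
  moreover have "(\<Sum>k<p. Z' i k * g (Suc k)) = (\<Sum>k<p. Z i k * g (Suc k))"
    by (rule sum.cong) (use same[OF i] in fastforce)+
  ultimately show "Z' i p = g 0 + (\<Sum>k<p. Z' i k * g (Suc k))"
    using fit i by (simp add: exact_fit_def design_sum)
qed

lemma not_rows_in_proper_subspaceI:
  assumes "0 < n" and dir: "\<And>q. q < p \<Longrightarrow> dir q < n"
    and kernel: "\<And>w. (\<And>q. q < p \<Longrightarrow> (\<Sum>k<p. (Z (dir q) k - Z 0 k) * w k) = 0) \<Longrightarrow> \<forall>k<p. w k = 0"
  shows "\<not> rows_in_proper_subspace n p Z"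
proof
  assume "rows_in_proper_subspace n p Z"
  then obtain v where v: "\<exists>k\<le>p. v k \<noteq> 0"
    and rows: "\<And>i. i < n \<Longrightarrow> v 0 + (\<Sum>k<p. Z i k * v (Suc k)) = 0"
    unfolding rows_in_proper_subspace_def design_sum by blast
  have "(\<Sum>k<p. (Z (dir q) k - Z 0 k) * v (Suc k)) = 0" if "q < p" for q
    using rows[OF dir[OF that]] rows[OF \<open>0 < n\<close>]
    by (simp add: left_diff_distrib sum_subtractf)
  then have "\<forall>k<p. v (Suc k) = 0" by (rule kernel)
  moreover have "v 0 = 0" using rows[OF \<open>0 < n\<close>] calculation by simp
  ultimately have "v k = 0" if "k \<le> p" for k
    using that by (cases k) auto
  then show False using v by blast
qed

lemma kernel_row_bound:
  fixes M :: "nat \<Rightarrow> nat \<Rightarrow> real"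
  assumes "(\<Sum>k<p. M q k * w k) = 0" "q < p"
    and "(\<Sum>k\<in>{..<p}-{q}. \<bar>M q k\<bar>) \<le> C" "\<And>k. k < p \<Longrightarrow> k \<noteq> q \<Longrightarrow> \<bar>w k\<bar> \<le> W" "0 \<le> W"
  shows "\<bar>M q q\<bar> * \<bar>w q\<bar> \<le> C * W"
proof -
  have "M q q * w q = - (\<Sum>k\<in>{..<p}-{q}. M q k * w k)"
    using assms(1,2) by (simp add: sum.remove eq_neg_iff_add_eq_0)
  then have "\<bar>M q q\<bar> * \<bar>w q\<bar> = \<bar>\<Sum>k\<in>{..<p}-{q}. M q k * w k\<bar>"
    by (metis abs_minus_cancel abs_mult)
  also have "\<dots> \<le> (\<Sum>k\<in>{..<p}-{q}. \<bar>M q k\<bar> * \<bar>w k\<bar>)"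
    by (rule sum_abs[THEN order_trans]) (simp add: abs_mult)
  also have "\<dots> \<le> (\<Sum>k\<in>{..<p}-{q}. \<bar>M q k\<bar>) * W"
    unfolding sum_distrib_right using assms(4) by (intro sum_mono mult_left_mono) auto
  also have "\<dots> \<le> C * W" using assms(3,5) by (rule mult_right_mono)
  finally show ?thesis .
qed

text \<open>Only the first row is allowed to be weakly dominant: a maximal \<open>\<bar>w k\<bar>\<close> cannot sit
  at some \<open>k > 0\<close>, and at \<open>k = 0\<close> it would force \<open>\<mu> * K \<le> C * C\<close>.\<close>
lemma diagonally_dominant_kernel_trivial:
  fixes M :: "nat \<Rightarrow> nat \<Rightarrow> real"
  assumes kernel: "\<And>q. q < p \<Longrightarrow> (\<Sum>k<p. M q k * w k) = 0"
    and diag_0: "\<mu> \<le> \<bar>M 0 0\<bar>" and diag: "\<And>q. 0 < q \<Longrightarrow> q < p \<Longrightarrow> K \<le> \<bar>M q q\<bar>"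
    and off_diag: "\<And>q. q < p \<Longrightarrow> (\<Sum>k\<in>{..<p}-{q}. \<bar>M q k\<bar>) \<le> C"
    and "C < K" and "C * C < \<mu> * K"
  shows "\<forall>k<p. w k = 0"
proof (cases "p = 0")
  case False
  then have "0 < p" by simp
  define V where "V = Max ((\<lambda>k. \<bar>w k\<bar>) ` {..<p})"
  have w_le_V: "\<bar>w k\<bar> \<le> V" if "k < p" for k
    unfolding V_def using that by (intro Max_ge) auto
  have "V \<in> (\<lambda>k. \<bar>w k\<bar>) ` {..<p}"
    unfolding V_def using False by (intro Max_in) auto
  then obtain k0 where k0: "k0 < p" "\<bar>w k0\<bar> = V" by auto
  then have "0 \<le> V" by auto
  have "0 \<le> (\<Sum>k\<in>{..<p}-{0}. \<bar>M 0 k\<bar>)" by (simp add: sum_nonneg)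
  then have "0 \<le> C" using off_diag[of 0] False by linarith
  then have "0 < K" using \<open>C < K\<close> by linarith
  have small: "\<bar>w q\<bar> \<le> C * V / K" if "0 < q" "q < p" for q
  proof -
    have "K * \<bar>w q\<bar> \<le> \<bar>M q q\<bar> * \<bar>w q\<bar>" using diag[OF that] by (simp add: mult_right_mono)
    also have "\<dots> \<le> C * V"
      by (rule kernel_row_bound[where M = M and w = w and C = C])
        (use kernel off_diag that w_le_V \<open>0 \<le> V\<close> in auto)
    finally show ?thesis using \<open>0 < K\<close> by (simp add: field_simps)
  qed
  show ?thesis
  proof (cases "V = 0")
    case True
    then show ?thesis using w_le_V by fastforce
  next
    case False
    then have "0 < V" using \<open>0 \<le> V\<close> by simp
    then have "C * V / K < V" using \<open>C < K\<close> \<open>0 < K\<close> by (simp add: field_simps)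
    then have "k0 = 0" using small[of k0] k0 by fastforce
    have "\<mu> * V \<le> \<bar>M 0 0\<bar> * \<bar>w 0\<bar>"
      using diag_0 k0 \<open>k0 = 0\<close> \<open>0 < V\<close> by (simp add: mult_right_mono)
    also have "\<dots> \<le> C * (C * V / K)"
      by (rule kernel_row_bound[where M = M and w = w and C = C])
        (use kernel off_diag \<open>0 < p\<close> small \<open>0 \<le> C\<close> \<open>0 < K\<close> \<open>0 < V\<close> in auto)
    finally have "\<mu> * K * V \<le> C * C * V" using \<open>0 < K\<close> by (simp add: field_simps)
    then show ?thesis using \<open>C * C < \<mu> * K\<close> \<open>0 < V\<close> by simp
  qed
qed simp

lemma sum_split_leading:
  fixes g :: "nat \<Rightarrow> 'a::comm_monoid_add"
  assumes "finite A" "j \<in> A" "\<And>k. k \<in> A \<Longrightarrow> k < j \<Longrightarrow> g k = 0"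
  shows "sum g A = g j + sum g {k\<in>A. j < k}"
proof -
  have "sum g A = g j + sum g (A - {j})" using assms(1,2) by (rule sum.remove)
  also have "sum g (A - {j}) = sum g {k\<in>A. j < k}"
  proof (rule sum.mono_neutral_right)
    show "\<forall>k\<in>A - {j} - {k\<in>A. j < k}. g k = 0"
    proof
      fix k assume "k \<in> A - {j} - {k\<in>A. j < k}"
      then have "k \<in> A" "k < j" by auto
      then show "g k = 0" by (rule assms(3))
    qed
  qed (use assms in auto)
  finally show ?thesis .
qed

section \<open>Choice functions with bounded fibres\<close>

lemma exists_maximal_prefix:
  fixes P :: "nat \<Rightarrow> bool"
  obtains r where "r \<le> N" "\<And>q. 0 < q \<Longrightarrow> q \<le> r \<Longrightarrow> P q" "r < N \<Longrightarrow> \<not> P (Suc r)"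
proof (cases "\<forall>q. 0 < q \<and> q \<le> N \<longrightarrow> P q")
  case True
  show ?thesis by (rule that[of N]) (use True in auto)
next
  case False
  define s where "s = (LEAST q. 0 < q \<and> q \<le> N \<and> \<not> P q)"
  have s: "0 < s \<and> s \<le> N \<and> \<not> P s"
    unfolding s_def by (rule LeastI_ex) (use False in blast)
  have below: "P q" if "0 < q" "q < s" for q
    using not_less_Least[of q "\<lambda>q. 0 < q \<and> q \<le> N \<and> \<not> P q"] that s unfolding s_def by auto
  show ?thesis by (rule that[of "s - 1"]) (use s below in auto)
qed

lemma exists_inj_choice:
  assumes "\<And>q. q \<le> r \<Longrightarrow> finite (A q)" and "\<And>q. q \<le> r \<Longrightarrow> q < card (A q)"
  shows "\<exists>f. inj_on f {..r} \<and> (\<forall>q\<le>r. f q \<in> A q)"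
  using assms
proof (induction r)
  case 0
  then obtain x where "x \<in> A 0" by fastforce
  then show ?case by (intro exI[of _ "\<lambda>_. x"]) auto
next
  case (Suc r)
  then obtain f where f: "inj_on f {..r}" "\<forall>q\<le>r. f q \<in> A q" by auto
  have "card (f ` {..r}) < card (A (Suc r))"
    using Suc.prems(2)[of "Suc r"] f(1) by (simp add: card_image)
  then have "\<not> A (Suc r) \<subseteq> f ` {..r}"
    using card_mono[of "f ` {..r}" "A (Suc r)"] by auto
  then obtain x where x: "x \<in> A (Suc r)" "x \<notin> f ` {..r}" by auto
  define f' where "f' = f(Suc r := x)"
  have agree: "f' q = f q" if "q \<in> {..r}" for q using that unfolding f'_def by simp
  have "inj_on f' {..r}" using f(1) inj_on_cong[of "{..r}" f' f] agree by blast
  moreover have "f' (Suc r) \<notin> f' ` {..r}"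
    using x(2) image_cong[OF refl agree] by (simp add: f'_def)
  ultimately have "inj_on f' (insert (Suc r) {..r})" by simp
  moreover have "\<forall>q\<le>Suc r. f' q \<in> A q"
    using f(2) x(1) by (simp add: f'_def le_Suc_eq)
  ultimately show ?case by (auto simp: atMost_Suc)
qed

lemma exists_map_with_bounded_fibres:
  fixes X :: "'a set" and Cols :: "'b set" and cap :: "'b \<Rightarrow> nat"
  assumes "finite X" "finite Cols" "card X \<le> (\<Sum>c\<in>Cols. cap c)"
  shows "\<exists>g. g ` X \<subseteq> Cols \<and> (\<forall>c\<in>Cols. card {x\<in>X. g x = c} \<le> cap c)"
  using assms(1,3)
proof (induction X rule: finite_induct)
  case empty
  then show ?case by auto
next
  case (insert x X)
  then obtain g where g: "g ` X \<subseteq> Cols" "\<forall>c\<in>Cols. card {y\<in>X. g y = c} \<le> cap c"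
    by auto
  have "\<exists>c0\<in>Cols. card {y\<in>X. g y = c0} < cap c0"
  proof (rule ccontr)
    assume "\<not> ?thesis"
    then have "(\<Sum>c\<in>Cols. cap c) \<le> (\<Sum>c\<in>Cols. card {y\<in>X. g y = c})"
      by (intro sum_mono) (simp add: not_less)
    also have "\<dots> = card X"
      using sum.group[OF insert.hyps(1) assms(2) g(1), of "\<lambda>_. 1::nat"] by simp
    finally show False using insert by simp
  qed
  then obtain c0 where c0: "c0 \<in> Cols" "card {y\<in>X. g y = c0} < cap c0" by blast
  have "card {y\<in>insert x X. (g(x := c0)) y = c} \<le> cap c" if "c \<in> Cols" for c
  proof (cases "c = c0")
    case True
    then have "{y\<in>insert x X. (g(x := c0)) y = c} = insert x {y\<in>X. g y = c}"
      using insert.hyps(2) by auto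
    then show ?thesis using c0 True insert.hyps by simp
  next
    case False
    then have "{y\<in>insert x X. (g(x := c0)) y = c} = {y\<in>X. g y = c}"
      using insert.hyps(2) by auto
    then show ?thesis using g(2) that by simp
  qed
  moreover have "(g(x := c0)) ` insert x X \<subseteq> Cols"
    using g(1) c0(1) insert.hyps(2) by auto
  ultimately show ?case by blast
qed

lemma card_fibre_inj_on:
  assumes "inj_on \<phi> R"
  shows "card {x\<in>R. \<phi> x = c} = (if c \<in> \<phi> ` R then 1 else 0)"
proof (cases "c \<in> \<phi> ` R")
  case True
  then obtain x0 where "x0 \<in> R" "c = \<phi> x0" by auto
  then have "{x\<in>R. \<phi> x = c} = {x0}" using assms by (auto simp: inj_on_def)
  then show ?thesis using True by simp
next
  case False
  then have "{x\<in>R. \<phi> x = c} = {}" by auto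
  then show ?thesis using False by (simp only: card.empty if_False)
qed

lemma exists_extension_with_bounded_fibres:
  assumes "finite U" "finite Cols" "R \<subseteq> U" "inj_on \<phi> R" "\<phi> ` R \<subseteq> Cols"
    and "card U \<le> card Cols * m"
  shows "\<exists>g. g ` U \<subseteq> Cols \<and> (\<forall>x\<in>R. g x = \<phi> x) \<and> (\<forall>c. card {x\<in>U. g x = c} \<le> m)"
proof (cases "m = 0")
  case True
  then show ?thesis using assms by (intro exI[of _ \<phi>]) auto
next
  case False
  define cap where "cap c = m - (if c \<in> \<phi> ` R then 1 else 0)" for c
  have "finite R" using assms(1,3) finite_subset by blast
  have "(\<Sum>c\<in>Cols. cap c) + card R = card Cols * m"
  proof -
    have "(\<Sum>c\<in>Cols. cap c) + (\<Sum>c\<in>Cols. if c \<in> \<phi> ` R then 1 else 0) = card Cols * m"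
      unfolding sum.distrib[symmetric] cap_def using False by simp
    moreover have "(\<Sum>c\<in>Cols. if c \<in> \<phi> ` R then 1 else 0) = card R"
      using assms(2,4,5) by (simp add: sum.If_cases Int_absorb1 card_image)
    ultimately show ?thesis by simp
  qed
  then have "card (U - R) \<le> (\<Sum>c\<in>Cols. cap c)"
    using assms(3,6) \<open>finite R\<close> by (simp add: card_Diff_subset)
  then obtain g where g: "g ` (U - R) \<subseteq> Cols" "\<forall>c\<in>Cols. card {x\<in>U - R. g x = c} \<le> cap c"
    using exists_map_with_bounded_fibres[of "U - R" Cols cap] assms(1,2) by blast
  define g' where "g' x = (if x \<in> R then \<phi> x else g x)" for x
  have "card {x\<in>U. g' x = c} \<le> m" for c
  proof (cases "c \<in> Cols")
    case True
    have "{x\<in>U. g' x = c} = {x\<in>R. \<phi> x = c} \<union> {x\<in>U - R. g x = c}"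
      using assms(3) unfolding g'_def by auto
    then show ?thesis
      using card_Un_le[of "{x\<in>R. \<phi> x = c}" "{x\<in>U - R. g x = c}"] g(2) True False
        card_fibre_inj_on[OF assms(4), of c] unfolding cap_def by (auto split: if_splits)
  next
    case False
    then have "{x\<in>U. g' x = c} = {}" using g(1) assms(5) by (auto simp: g'_def)
    then show ?thesis by (simp only: card.empty le0)
  qed
  then show ?thesis using g(1) assms(5) by (intro exI[of _ g']) (auto simp: g'_def)
qed

section \<open>Deviations from the base row and refitting\<close>

definition deviating_rows :: "nat \<Rightarrow> nat \<Rightarrow> (nat \<Rightarrow> nat \<Rightarrow> real) \<Rightarrow> nat \<Rightarrow> nat set" where
  "deviating_rows n p Z s = {i. 0 < i \<and> i < n \<and> (Z i p \<noteq> Z 0 p \<or> (\<exists>k\<le>s. Z i k \<noteq> Z 0 k))}"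

lemma deviating_rows_mono:
  assumes "s \<le> s'"
  shows "deviating_rows n p Z s \<subseteq> deviating_rows n p Z s'"
  unfolding deviating_rows_def by (auto intro: le_trans[OF _ assms])

lemma deviating_rows_subset: "deviating_rows n p Z s \<subseteq> {1..<n}"
  unfolding deviating_rows_def by auto

lemma finite_deviating_rows [simp]: "finite (deviating_rows n p Z s)"
  by (rule finite_subset[OF deviating_rows_subset]) simp

definition least_deviation :: "nat \<Rightarrow> nat \<Rightarrow> (nat \<Rightarrow> nat \<Rightarrow> real) \<Rightarrow> real" where
  "least_deviation n p Z = Min (insert 1 ((\<lambda>(i, k). \<bar>Z i k - Z 0 k\<bar>) `
     {(i, k). i < n \<and> k \<le> p \<and> Z i k \<noteq> Z 0 k}))"

definition total_deviation :: "nat \<Rightarrow> nat \<Rightarrow> (nat \<Rightarrow> nat \<Rightarrow> real) \<Rightarrow> real" where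
  "total_deviation n p Z = (\<Sum>i<n. \<Sum>k\<le>p. \<bar>Z i k - Z 0 k\<bar>)"

lemma finite_deviations: "finite {(i, k). i < n \<and> k \<le> p \<and> Z i k \<noteq> Z 0 k}"
  for Z :: "nat \<Rightarrow> nat \<Rightarrow> real"
  by (rule finite_subset[of _ "{..<n} \<times> {..p}"]) auto

lemma least_deviation_pos: "0 < least_deviation n p Z"
  unfolding least_deviation_def using finite_deviations by (subst Min_gr_iff) auto

lemma least_deviation_le_1: "least_deviation n p Z \<le> 1"
  unfolding least_deviation_def using finite_deviations by (intro Min_le) auto

lemma least_deviation_le:
  assumes "i < n" "k \<le> p" "Z i k \<noteq> Z 0 k"
  shows "least_deviation n p Z \<le> \<bar>Z i k - Z 0 k\<bar>"
  unfolding least_deviation_def using finite_deviations assms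
  by (intro Min_le) (auto intro!: image_eqI[where x = "(i, k)"])

lemma total_deviation_ge:
  assumes "i < n" "A \<subseteq> {..p}"
  shows "(\<Sum>k\<in>A. \<bar>Z i k - Z 0 k\<bar>) \<le> total_deviation n p Z"
proof -
  have "(\<Sum>k\<in>A. \<bar>Z i k - Z 0 k\<bar>) \<le> (\<Sum>k\<le>p. \<bar>Z i k - Z 0 k\<bar>)"
    using assms(2) by (intro sum_mono2) auto
  also have "\<dots> \<le> total_deviation n p Z"
    unfolding total_deviation_def
    by (rule member_le_sum) (use assms(1) in \<open>auto simp: sum_nonneg\<close>)
  finally show ?thesis .
qed

lemma total_deviation_nonneg: "0 \<le> total_deviation n p Z"
  unfolding total_deviation_def by (intro sum_nonneg) auto

definition residual :: "nat \<Rightarrow> (nat \<Rightarrow> nat \<Rightarrow> real) \<Rightarrow> (nat \<Rightarrow> real) \<Rightarrow> real \<Rightarrow> nat \<Rightarrow> real" where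
  "residual p Z b a i = Z i p - (a + (\<Sum>k<p. b k * Z i k))"

definition refit ::
  "nat \<Rightarrow> nat \<Rightarrow> (nat \<Rightarrow> real) \<Rightarrow> real \<Rightarrow> (nat \<Rightarrow> nat option) \<Rightarrow> (nat \<Rightarrow> nat \<Rightarrow> real) \<Rightarrow> nat \<Rightarrow> nat \<Rightarrow> real"
where
  "refit n p b a c Z i k =
     (if i < n \<and> c i = Some k then
        if k = p then Z i p - residual p Z b a i else Z i k + residual p Z b a i / b k
      else Z i k)"

lemma exact_fit_refit:
  assumes fitted: "\<And>i. i < n \<Longrightarrow> c i = None \<Longrightarrow> residual p Z b a i = 0"
    and cells: "\<And>i q. i < n \<Longrightarrow> c i = Some q \<Longrightarrow> q = p \<or> q < p \<and> b q \<noteq> 0"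
  shows "exact_fit n p (refit n p b a c Z) (case_nat a b)"
  unfolding exact_fit_def design_sum
proof (intro allI impI)
  fix i assume i: "i < n"
  let ?Z' = "refit n p b a c Z" and ?e = "residual p Z b a i"
  have "?Z' i p = a + (\<Sum>k<p. ?Z' i k * b k)"
  proof (cases "c i")
    case None
    then show ?thesis using fitted[OF i] by (simp add: refit_def residual_def mult.commute)
  next
    case (Some q)
    show ?thesis
    proof (cases "q = p")
      case True
      then show ?thesis using Some i by (simp add: refit_def residual_def mult.commute)
    next
      case False
      then have q: "q < p" "b q \<noteq> 0" using cells[OF i Some] by auto
      have "?Z' i k * b k = Z i k * b k + (if k = q then ?e else 0)" for k
        using Some i q by (auto simp: refit_def field_simps)
      then have "(\<Sum>k<p. ?Z' i k * b k) = (\<Sum>k<p. Z i k * b k) + ?e"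
        using q by (simp add: sum.distrib)
      then show ?thesis using Some i False by (simp add: refit_def residual_def mult.commute)
    qed
  qed
  then show "?Z' i p = case_nat a b 0 + (\<Sum>k<p. ?Z' i k * case_nat a b (Suc k))" by simp
qed

section \<open>The contaminated data set\<close>

text \<open>Row \<open>f q\<close> (\<open>q \<le> r\<close>) is the probe row of covariate \<open>q\<close>; \<open>c i\<close> is the one cell
  refitted in row \<open>i\<close>, and the rows needing one are exactly those deviating in the response
  or in a covariate \<open>\<le> r\<close>. For \<open>r < q < p\<close> the probe row \<open>h q\<close> does not deviate there and
  gets its \<open>q\<close>-th covariate pushed out.\<close>
locale breakdown_plan =
  fixes n p :: nat and Z :: "nat \<Rightarrow> nat \<Rightarrow> real"
    and r :: nat and f h :: "nat \<Rightarrow> nat" and c :: "nat \<Rightarrow> nat option"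
  assumes r_less: "r < p"
    and f_inj: "inj_on f {..r}"
    and f_0: "f 0 \<in> deviating_rows n p Z 0"
    and f_Suc: "\<And>q. q < r \<Longrightarrow> f (Suc q) \<in> deviating_rows n p Z q"
    and c_f_0: "c (f 0) = Some (if Z (f 0) 0 = Z 0 0 then 0 else p)"
    and c_f_Suc: "\<And>q. q < r \<Longrightarrow> c (f (Suc q)) = Some (Suc q)"
    and c_defined: "\<And>i. c i \<noteq> None \<longleftrightarrow> i \<in> deviating_rows n p Z r"
    and c_range: "\<And>i q. c i = Some q \<Longrightarrow> q \<le> r \<or> q = p"
    and h_inj: "inj_on h {r<..<p}"
    and h_range: "h ` {r<..<p} \<subseteq> {1..<n} - deviating_rows n p Z r"
begin

lemma f_deviating:
  assumes "q \<le> r"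
  shows "f q \<in> deviating_rows n p Z r"
proof (cases q)
  case 0
  then show ?thesis using f_0 deviating_rows_mono[of 0 r] by auto
next
  case (Suc q')
  then show ?thesis using assms f_Suc[of q'] deviating_rows_mono[of q' r] by auto
qed

lemma c_eq_None: "i \<notin> deviating_rows n p Z r \<Longrightarrow> c i = None"
  using c_defined by blast

lemma h_not_deviating:
  assumes "q \<in> {r<..<p}"
  shows "h q \<notin> deviating_rows n p Z r \<and> 0 < h q \<and> h q < n"
proof -
  have "h q \<in> {1..<n} - deviating_rows n p Z r" using h_range assms by blast
  then show ?thesis by auto
qed

definition probe :: "nat \<Rightarrow> nat" where
  "probe q = (if q \<le> r then f q else h q)"

lemma probe_less: "q < p \<Longrightarrow> probe q < n"
  using f_deviating[of q] h_not_deviating[of q] deviating_rows_subset[of n p Z r]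
  unfolding probe_def by (cases "q \<le> r") auto

end

locale breakdown_construction = breakdown_plan +
  fixes t :: real
  assumes t_large: "total_deviation n p Z + 1 \<le> t * least_deviation n p Z"
begin

abbreviation \<delta> where "\<delta> \<equiv> least_deviation n p Z"
abbreviation C where "C \<equiv> total_deviation n p Z"

text \<open>\<open>\<mu>\<close> and \<open>K\<close> bound the diagonal of the probe matrix from below (\<open>\<mu>\<close> only for the
  first covariate, whose large coefficient \<open>t\<close> shrinks its refitted entry); \<open>\<eta>\<close> makes
  \<open>\<eta> * C \<le> \<delta> / 2\<close>, so that in every residual the leading nonzero term dominates.\<close>
definition \<mu> where "\<mu> = \<delta> / (2 * t)"
definition K where "K = (C + 1)\<^sup>2 / \<mu>"
definition \<eta> where "\<eta> = \<delta> / (2 * K)"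

lemma t_ge_1: "1 \<le> t"
proof -
  have \<delta>: "0 < \<delta>" "\<delta> \<le> 1" by (simp_all add: least_deviation_pos least_deviation_le_1)
  have "1 \<le> t * \<delta>" using t_large total_deviation_nonneg[of n p Z] by linarith
  moreover from this have "0 < t" using \<delta>(1) zero_less_mult_pos2[of t \<delta>] by linarith
  ultimately show ?thesis using mult_left_le[OF \<delta>(2), of t] by linarith
qed

lemma \<delta>_pos: "0 < \<delta>" and \<delta>_le_1: "\<delta> \<le> 1" and C_nonneg: "0 \<le> C"
  by (simp_all add: least_deviation_pos least_deviation_le_1 total_deviation_nonneg)

lemma \<mu>_pos: "0 < \<mu>" and \<mu>_le_\<delta>: "\<mu> \<le> \<delta>"
  using \<delta>_pos t_ge_1 by (auto simp: \<mu>_def field_simps)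

lemma \<mu>_K: "\<mu> * K = (C + 1)\<^sup>2"
  using \<mu>_pos by (simp add: K_def)

lemma K_ge: "C + 1 \<le> K"
proof -
  have "C + 1 \<le> (C + 1)\<^sup>2" using C_nonneg by (intro self_le_power) auto
  also have "\<dots> = (C + 1)\<^sup>2 / 1" by simp
  also have "\<dots> \<le> (C + 1)\<^sup>2 / \<mu>"
    using \<mu>_pos \<mu>_le_\<delta> \<delta>_le_1 by (intro divide_left_mono) auto
  finally show ?thesis unfolding K_def .
qed

lemma C_sq_less: "C * C < \<mu> * K"
  unfolding \<mu>_K using C_nonneg by (simp add: power2_eq_square algebra_simps)

lemma \<eta>_pos: "0 < \<eta>" and \<eta>_le_1: "\<eta> \<le> 1"
proof -
  have "0 < K" "\<delta> \<le> 2 * K" using K_ge C_nonneg \<delta>_le_1 by linarith+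
  then show "0 < \<eta>" "\<eta> \<le> 1" using \<delta>_pos by (simp_all add: \<eta>_def divide_le_eq)
qed

lemma \<eta>_C: "\<eta> * C \<le> \<delta> / 2"
proof -
  have "0 < K" using K_ge C_nonneg by linarith
  have "\<eta> * C = (\<delta> * C) / (2 * K)" by (simp add: \<eta>_def)
  also have "\<dots> \<le> (\<delta> * K) / (2 * K)"
    using K_ge \<delta>_pos \<open>0 < K\<close> by (intro divide_right_mono mult_left_mono) auto
  also have "\<dots> = \<delta> / 2" using \<open>0 < K\<close> by simp
  finally show ?thesis .
qed

lemma K_eq: "K = \<delta> / (2 * \<eta>)"
  using \<delta>_pos K_ge C_nonneg by (simp add: \<eta>_def)

definition slope :: "nat \<Rightarrow> real" where
  "slope k = (if k = 0 then t else if k \<le> r then \<eta> ^ k else 0)"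

definition intercept :: real where
  "intercept = Z 0 p - (\<Sum>k<p. slope k * Z 0 k)"

definition contaminated :: "nat \<Rightarrow> nat \<Rightarrow> real" where
  "contaminated i k =
     (if k \<in> {r<..<p} \<and> i = h k then Z 0 k + K else refit n p slope intercept c Z i k)"

lemma slope_nonzero: "q \<le> r \<Longrightarrow> slope q \<noteq> 0"
  using t_ge_1 \<eta>_pos by (simp add: slope_def)

lemma residual_eq:
  "residual p Z slope intercept i = (Z i p - Z 0 p) - (\<Sum>k<p. slope k * (Z i k - Z 0 k))"
  by (simp add: residual_def intercept_def right_diff_distrib sum_subtractf)

lemma residual_not_deviating:
  assumes "i < n" "i \<notin> deviating_rows n p Z r"
  shows "residual p Z slope intercept i = 0"
proof (cases "i = 0")
  case False
  then have "Z i p = Z 0 p" "\<And>k. k \<le> r \<Longrightarrow> Z i k = Z 0 k"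
    using assms unfolding deviating_rows_def by auto
  moreover have "slope k * (Z i k - Z 0 k) = 0" for k
    using calculation(2)[of k] by (cases "k \<le> r") (auto simp: slope_def)
  then have "(\<Sum>k<p. slope k * (Z i k - Z 0 k)) = 0" by (rule sum.neutral[OF ballI])
  ultimately show ?thesis by (simp add: residual_eq)
qed (simp add: residual_eq)

lemma exact_fit_contaminated: "exact_fit n p contaminated (case_nat intercept slope)"
proof (rule exact_fit_cong_zero_coefficients)
  show "exact_fit n p (refit n p slope intercept c Z) (case_nat intercept slope)"
  proof (rule exact_fit_refit)
    show "residual p Z slope intercept i = 0" if "i < n" "c i = None" for i
      using that c_defined residual_not_deviating by blast
    show "q = p \<or> q < p \<and> slope q \<noteq> 0" if "c i = Some q" for i q
      using c_range[OF that] r_less slope_nonzero by auto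
  qed
  show "k < p \<and> case_nat intercept slope (Suc k) = 0"
    if "contaminated i k \<noteq> refit n p slope intercept c Z i k" for i k
    using that by (auto simp: contaminated_def slope_def split: if_splits)
qed

lemma contaminated_cells:
  assumes "contaminated i k \<noteq> Z i k"
  shows "i < n \<and> (c i = Some k \<or> k \<in> {r<..<p} \<and> i = h k)"
  using assms h_not_deviating unfolding contaminated_def
  by (auto simp: refit_def split: if_splits)

definition off_residual :: "nat \<Rightarrow> nat \<Rightarrow> real" where
  "off_residual i q = (Z i p - Z 0 p) - (\<Sum>k\<in>{..<p}-{q}. slope k * (Z i k - Z 0 k))"

lemma contaminated_refit_cell:
  assumes i: "i \<in> deviating_rows n p Z r" and c: "c i = Some q" and "q < p"
  shows "contaminated i q - Z 0 q = off_residual i q / slope q"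
proof -
  have "q \<le> r" using c_range[OF c] \<open>q < p\<close> by auto
  have "i < n" using i deviating_rows_subset[of n p Z r] by auto
  have "(\<Sum>k<p. slope k * (Z i k - Z 0 k))
      = slope q * (Z i q - Z 0 q) + (\<Sum>k\<in>{..<p}-{q}. slope k * (Z i k - Z 0 k))"
    using \<open>q < p\<close> by (simp add: sum.remove)
  then have "residual p Z slope intercept i = off_residual i q - slope q * (Z i q - Z 0 q)"
    by (simp add: residual_eq off_residual_def)
  then show ?thesis
    using \<open>i < n\<close> c \<open>q < p\<close> \<open>q \<le> r\<close> slope_nonzero[OF \<open>q \<le> r\<close>]
    by (simp add: contaminated_def refit_def field_simps)
qed

lemma slope_tail_bound:
  assumes "finite A" "\<And>k. k \<in> A \<Longrightarrow> j < k"
  shows "\<bar>\<Sum>k\<in>A. slope k * u k\<bar> \<le> \<eta> ^ Suc j * (\<Sum>k\<in>A. \<bar>u k\<bar>)"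
proof -
  have "\<bar>slope k\<bar> \<le> \<eta> ^ Suc j" if "j < k" for k
    using that \<eta>_pos \<eta>_le_1 power_decreasing[of "Suc j" k \<eta>] by (auto simp: slope_def)
  then have "\<bar>\<Sum>k\<in>A. slope k * u k\<bar> \<le> (\<Sum>k\<in>A. \<eta> ^ Suc j * \<bar>u k\<bar>)"
    using assms(2) by (intro order_trans[OF sum_abs] sum_mono) (auto simp: abs_mult mult_right_mono)
  then show ?thesis by (simp add: sum_distrib_left)
qed

lemma leading_deviation_0:
  assumes "i < n" "Z i p \<noteq> Z 0 p \<or> Z i 0 \<noteq> Z 0 0"
  shows "\<delta> \<le> \<bar>(Z i p - Z 0 p) - t * (Z i 0 - Z 0 0)\<bar>"
proof (cases "Z i 0 = Z 0 0")
  case True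
  then show ?thesis using assms least_deviation_le[OF assms(1) order_refl] by auto
next
  case False
  have "C + 1 \<le> t * \<delta>" by (rule t_large)
  also have "\<dots> \<le> t * \<bar>Z i 0 - Z 0 0\<bar>"
    using least_deviation_le[of i n 0 p Z] assms(1) False t_ge_1 by (intro mult_left_mono) auto
  finally have "C + 1 \<le> \<bar>t * (Z i 0 - Z 0 0)\<bar>" using t_ge_1 by (simp add: abs_mult)
  moreover have "\<bar>Z i p - Z 0 p\<bar> \<le> C" using total_deviation_ge[OF assms(1), of "{p}"] by simp
  ultimately show ?thesis using \<delta>_le_1 by linarith
qed

lemma leading_deviation:
  assumes i: "i \<in> deviating_rows n p Z q" and "q < r"
  obtains j where "j \<le> q" "\<And>k. k < j \<Longrightarrow> Z i k = Z 0 k"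
    "\<eta> ^ j * \<delta> \<le> \<bar>(Z i p - Z 0 p) - slope j * (Z i j - Z 0 j)\<bar>"
proof (cases "Z i p = Z 0 p \<and> Z i 0 = Z 0 0")
  case False
  have "i < n" using i deviating_rows_subset[of n p Z q] by auto
  then show ?thesis
    using leading_deviation_0 False by (intro that[of 0]) (simp_all add: slope_def)
next
  case True
  then obtain k0 where k0: "k0 \<le> q" "Z i k0 \<noteq> Z 0 k0" using i unfolding deviating_rows_def by auto
  define j where "j = (LEAST k. Z i k \<noteq> Z 0 k)"
  have j: "Z i j \<noteq> Z 0 j" "j \<le> q" "\<And>k. k < j \<Longrightarrow> Z i k = Z 0 k"
  proof -
    show "Z i j \<noteq> Z 0 j" unfolding j_def by (rule LeastI[of _ k0]) (rule k0(2))
    have "j \<le> k0" unfolding j_def by (rule Least_le) (rule k0(2))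
    then show "j \<le> q" using k0(1) by simp
    show "Z i k = Z 0 k" if "k < j" for k using not_less_Least[of k] that unfolding j_def by blast
  qed
  have "0 < j" using j(1) True by (cases j) auto
  have "i < n" using i deviating_rows_subset[of n p Z q] by auto
  have "\<eta> ^ j * \<delta> \<le> \<eta> ^ j * \<bar>Z i j - Z 0 j\<bar>"
    using least_deviation_le[of i n j p Z] \<open>i < n\<close> j(1) j(2) \<open>q < r\<close> r_less \<eta>_pos
    by (intro mult_left_mono) auto
  also have "\<dots> = \<bar>(Z i p - Z 0 p) - slope j * (Z i j - Z 0 j)\<bar>"
    using True \<open>0 < j\<close> j(2) \<open>q < r\<close> \<eta>_pos by (simp add: slope_def abs_mult)
  finally show ?thesis using j(2,3) that by blast
qed

lemma off_residual_bound:
  assumes i: "i \<in> deviating_rows n p Z q" and "q < r"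
  shows "\<eta> ^ q * \<delta> / 2 \<le> \<bar>off_residual i (Suc q)\<bar>"
proof -
  obtain j where j: "j \<le> q" "\<And>k. k < j \<Longrightarrow> Z i k = Z 0 k"
    and lead: "\<eta> ^ j * \<delta> \<le> \<bar>(Z i p - Z 0 p) - slope j * (Z i j - Z 0 j)\<bar>"
    using leading_deviation[OF assms] by blast
  have "i < n" using i deviating_rows_subset[of n p Z q] by auto
  let ?A = "{..<p} - {Suc q}" and ?g = "\<lambda>k. slope k * (Z i k - Z 0 k)"
  let ?T = "{k\<in>?A. j < k}"
  have split: "sum ?g ?A = ?g j + sum ?g ?T"
    by (rule sum_split_leading) (use j \<open>q < r\<close> r_less in auto)
  have "\<bar>sum ?g ?T\<bar> \<le> \<eta> ^ Suc j * (\<Sum>k\<in>?T. \<bar>Z i k - Z 0 k\<bar>)"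
    by (rule slope_tail_bound) auto
  also have "\<dots> \<le> \<eta> ^ Suc j * C"
    using total_deviation_ge[OF \<open>i < n\<close>, of ?T] \<eta>_pos by (intro mult_left_mono) (auto simp: subset_eq)
  also have "\<dots> \<le> \<eta> ^ j * (\<delta> / 2)"
    using \<eta>_C \<eta>_pos by (simp add: mult_left_mono)
  finally have tail: "\<bar>sum ?g ?T\<bar> \<le> \<eta> ^ j * (\<delta> / 2)" .
  have "\<bar>(Z i p - Z 0 p) - ?g j\<bar> - \<bar>sum ?g ?T\<bar> \<le> \<bar>(Z i p - Z 0 p) - ?g j - sum ?g ?T\<bar>"
    by (rule abs_triangle_ineq2)
  moreover have "off_residual i (Suc q) = (Z i p - Z 0 p) - ?g j - sum ?g ?T"
    unfolding off_residual_def split by simp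
  ultimately have "\<eta> ^ j * \<delta> / 2 \<le> \<bar>off_residual i (Suc q)\<bar>"
    using lead tail by linarith
  moreover have "\<eta> ^ q * \<delta> \<le> \<eta> ^ j * \<delta>"
    using j(1) \<eta>_pos \<eta>_le_1 \<delta>_pos by (simp add: power_decreasing)
  ultimately show ?thesis by linarith
qed

lemma off_residual_0_bound:
  assumes "i < n" "Z i p \<noteq> Z 0 p"
  shows "\<delta> / 2 \<le> \<bar>off_residual i 0\<bar>"
proof -
  let ?A = "{..<p} - {0}"
  have "\<bar>\<Sum>k\<in>?A. slope k * (Z i k - Z 0 k)\<bar> \<le> \<eta> ^ Suc 0 * (\<Sum>k\<in>?A. \<bar>Z i k - Z 0 k\<bar>)"
    by (rule slope_tail_bound) auto
  also have "\<dots> \<le> \<eta> * C"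
    using total_deviation_ge[of i n ?A p Z] assms(1) \<eta>_pos by (simp add: subset_eq)
  finally have "\<bar>\<Sum>k\<in>?A. slope k * (Z i k - Z 0 k)\<bar> \<le> \<delta> / 2" using \<eta>_C by linarith
  moreover have "\<delta> \<le> \<bar>Z i p - Z 0 p\<bar>" using least_deviation_le[of i n p p Z] assms by simp
  ultimately show ?thesis unfolding off_residual_def by linarith
qed

lemma contaminated_row_0: "contaminated 0 k = Z 0 k"
proof (rule ccontr)
  assume "contaminated 0 k \<noteq> Z 0 k"
  then have "c 0 = Some k \<or> k \<in> {r<..<p} \<and> 0 = h k" by (rule contaminated_cells[THEN conjunct2])
  moreover have "c 0 = None" by (rule c_eq_None) (simp add: deviating_rows_def)
  ultimately show False using h_not_deviating[of k] by auto
qed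

lemma probe_off_diagonal:
  assumes "q < p" "k < p" "k \<noteq> q"
  shows "contaminated (probe q) k = Z (probe q) k"
proof (rule ccontr)
  assume "contaminated (probe q) k \<noteq> Z (probe q) k"
  then have changed: "c (probe q) = Some k \<or> k \<in> {r<..<p} \<and> probe q = h k"
    by (rule contaminated_cells[THEN conjunct2])
  show False
  proof (cases "q \<le> r")
    case True
    have "c (f q) \<noteq> Some k"
      using c_f_0 c_f_Suc[of "q - 1"] True assms by (cases q) (auto split: if_splits)
    moreover have "f q \<noteq> h k" if "k \<in> {r<..<p}"
      using f_deviating[OF True] h_not_deviating[OF that] by auto
    ultimately show False using changed True by (auto simp: probe_def)
  next
    case False
    then have q: "q \<in> {r<..<p}" using assms(1) by auto
    then have "c (h q) = None" using h_not_deviating c_eq_None by blast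
    moreover have "h q \<noteq> h k" if "k \<in> {r<..<p}"
      using inj_onD[OF h_inj _ q that] assms(3) by auto
    ultimately show False using changed False by (auto simp: probe_def)
  qed
qed

lemma probe_diagonal:
  assumes "0 < q" "q < p"
  shows "K \<le> \<bar>contaminated (probe q) q - Z 0 q\<bar>"
proof (cases "q \<le> r")
  case True
  then obtain q' where q: "q = Suc q'" "q' < r" using assms(1) by (cases q) auto
  have "contaminated (f q) q - Z 0 q = off_residual (f q) q / slope q"
    using contaminated_refit_cell[OF f_deviating[OF True]] c_f_Suc[OF q(2)] assms(2) q(1) by simp
  then have "contaminated (f q) q - Z 0 q = off_residual (f q) q / \<eta> ^ q"
    using True q(1) by (simp add: slope_def)
  moreover have "K = (\<eta> ^ q' * \<delta> / 2) / \<eta> ^ q"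
    using \<eta>_pos q(1) by (simp add: K_eq field_simps)
  moreover have "(\<eta> ^ q' * \<delta> / 2) / \<eta> ^ q \<le> \<bar>off_residual (f q) q\<bar> / \<eta> ^ q"
    using off_residual_bound[OF f_Suc[OF q(2)] q(2)] q(1) \<eta>_pos by (intro divide_right_mono) auto
  ultimately show ?thesis
    using True \<eta>_pos by (simp add: probe_def abs_divide)
next
  case False
  then have "contaminated (h q) q = Z 0 q + K" using assms(2) by (simp add: contaminated_def)
  then show ?thesis using False K_ge C_nonneg by (simp add: probe_def)
qed

lemma probe_diagonal_0: "\<mu> \<le> \<bar>contaminated (probe 0) 0 - Z 0 0\<bar>"
proof -
  have f0: "f 0 \<in> deviating_rows n p Z r" "f 0 < n"
    using f_deviating[of 0] deviating_rows_subset[of n p Z r] by auto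
  show ?thesis
  proof (cases "Z (f 0) 0 = Z 0 0")
    case True
    then have "Z (f 0) p \<noteq> Z 0 p" using f_0 unfolding deviating_rows_def by auto
    have "contaminated (f 0) 0 - Z 0 0 = off_residual (f 0) 0 / t"
      using contaminated_refit_cell[OF f0(1)] c_f_0 True r_less by (simp add: slope_def)
    moreover have "\<mu> = (\<delta> / 2) / t" by (simp add: \<mu>_def)
    moreover have "(\<delta> / 2) / t \<le> \<bar>off_residual (f 0) 0\<bar> / t"
      using off_residual_0_bound[OF f0(2) \<open>Z (f 0) p \<noteq> Z 0 p\<close>] t_ge_1
      by (intro divide_right_mono) auto
    ultimately show ?thesis using t_ge_1 by (simp add: probe_def abs_divide)
  next
    case False
    then have "contaminated (f 0) 0 = Z (f 0) 0"
      using c_f_0 r_less by (auto simp: contaminated_def refit_def)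
    then show ?thesis
      using least_deviation_le[of "f 0" n 0 p Z] f0(2) False \<mu>_le_\<delta> by (simp add: probe_def)
  qed
qed

lemma not_rows_in_proper_subspace_contaminated: "\<not> rows_in_proper_subspace n p contaminated"
proof (rule not_rows_in_proper_subspaceI)
  show "0 < n" using probe_less[of 0] r_less by linarith
  show "probe q < n" if "q < p" for q using probe_less[OF that] .
  fix w
  assume kernel: "\<And>q. q < p \<Longrightarrow> (\<Sum>k<p. (contaminated (probe q) k - contaminated 0 k) * w k) = 0"
  show "\<forall>k<p. w k = 0"
  proof (rule diagonally_dominant_kernel_trivial[OF kernel])
    show "\<mu> \<le> \<bar>contaminated (probe 0) 0 - contaminated 0 0\<bar>"
      using probe_diagonal_0 by (simp add: contaminated_row_0)
    show "K \<le> \<bar>contaminated (probe q) q - contaminated 0 q\<bar>" if "0 < q" "q < p" for q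
      using probe_diagonal[OF that] by (simp add: contaminated_row_0)
    show "(\<Sum>k\<in>{..<p}-{q}. \<bar>contaminated (probe q) k - contaminated 0 k\<bar>) \<le> C" if "q < p" for q
    proof -
      have "(\<Sum>k\<in>{..<p}-{q}. \<bar>contaminated (probe q) k - contaminated 0 k\<bar>)
          = (\<Sum>k\<in>{..<p}-{q}. \<bar>Z (probe q) k - Z 0 k\<bar>)"
        using probe_off_diagonal[OF that] by (intro sum.cong) (auto simp: contaminated_row_0)
      also have "\<dots> \<le> C" using total_deviation_ge[OF probe_less[OF that]] by (auto simp: subset_eq)
      finally show ?thesis .
    qed
    show "C < K" using K_ge by linarith
    show "C * C < \<mu> * K" by (rule C_sq_less)
  qed
qed

end

lemma (in breakdown_plan) estimate_unbounded:
  assumes "exact_fit_property n p est"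
  shows "\<exists>Z'. (\<forall>i k. Z' i k \<noteq> Z i k \<longrightarrow> i < n \<and> (c i = Some k \<or> k \<in> {r<..<p} \<and> i = h k))
    \<and> B < coef_dist p (est Z') \<gamma>"
proof -
  define t where "t = max ((total_deviation n p Z + 1) / least_deviation n p Z) (\<bar>B\<bar> + \<bar>\<gamma> 1\<bar> + 1)"
  have "total_deviation n p Z + 1 \<le> t * least_deviation n p Z"
    using least_deviation_pos[of n p Z] unfolding t_def by (simp add: field_simps max_def)
  then interpret breakdown_construction n p Z r f h c t
    by (intro breakdown_construction.intro breakdown_plan_axioms breakdown_construction_axioms.intro)
  have "est contaminated k = case_nat intercept slope k" if "k \<le> p" for k
    using assms exact_fit_contaminated not_rows_in_proper_subspace_contaminated that
    unfolding exact_fit_property_def by blast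
  then have "est contaminated 1 = t" using r_less by (simp add: slope_def)
  moreover have "\<bar>B\<bar> + \<bar>\<gamma> 1\<bar> + 1 \<le> t" unfolding t_def by simp
  ultimately have "B < \<bar>est contaminated 1 - \<gamma> 1\<bar>" by linarith
  also have "\<dots> \<le> coef_dist p (est contaminated) \<gamma>"
    using r_less by (intro coef_dist_ge_component) simp
  finally have "B < coef_dist p (est contaminated) \<gamma>" .
  then show ?thesis using contaminated_cells by blast
qed

section \<open>A plan within the budget\<close>

lemma exists_probe_rows:
  assumes "1 \<le> p" "p + 1 \<le> n" "n - 1 \<le> (p + 1) * m" "deviating_rows n p Z 0 \<noteq> {}"
  obtains r f where "r < p" "inj_on f {..r}" "f 0 \<in> deviating_rows n p Z 0"
    "\<And>q. q < r \<Longrightarrow> f (Suc q) \<in> deviating_rows n p Z q"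
    "card (deviating_rows n p Z r) \<le> (r + 2) * m"
    "r < p - 1 \<Longrightarrow> card (deviating_rows n p Z r) \<le> r + 1"
proof -
  let ?D = "deviating_rows n p Z"
  obtain r where r: "r \<le> p - 1" "\<And>q. 0 < q \<Longrightarrow> q \<le> r \<Longrightarrow> q < card (?D (q - 1))"
    and stop: "r < p - 1 \<Longrightarrow> \<not> Suc r < card (?D (Suc r - 1))"
    using exists_maximal_prefix[where N = "p - 1" and P = "\<lambda>q. q < card (?D (q - 1))"] by blast
  have "\<exists>f. inj_on f {..r} \<and> (\<forall>q\<le>r. f q \<in> (if q = 0 then ?D 0 else ?D (q - 1)))"
    using r(2) assms(4) by (intro exists_inj_choice) (auto simp: card_gt_0_iff)
  then obtain f where f: "inj_on f {..r}" "\<And>q. q \<le> r \<Longrightarrow> f q \<in> (if q = 0 then ?D 0 else ?D (q - 1))"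
    by blast
  have small: "card (?D r) \<le> r + 1" if "r < p - 1" using stop[OF that] by simp
  have "1 \<le> m" using assms(1-3) by (cases m) auto
  have "card (?D r) \<le> (r + 2) * m"
  proof (cases "r < p - 1")
    case True
    have "r + 2 \<le> (r + 2) * m" using mult_le_mono2[OF \<open>1 \<le> m\<close>, of "r + 2"] by simp
    then show ?thesis using small[OF True] by linarith
  next
    case False
    then have "r + 2 = p + 1" using r(1) assms(1) by simp
    moreover have "card (?D r) \<le> card {1..<n}" by (rule card_mono[OF _ deviating_rows_subset]) simp
    ultimately show ?thesis using assms(3) by simp
  qed
  moreover have "f (Suc q) \<in> ?D q" if "q < r" for q using f(2)[of "Suc q"] that by simp
  moreover have "f 0 \<in> ?D 0" using f(2)[of 0] by simp
  moreover have "r < p" using r(1) assms(1) by simp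
  ultimately show thesis using that f(1) small by blast
qed

lemma exists_refit_assignment:
  fixes Z :: "nat \<Rightarrow> nat \<Rightarrow> real"
  assumes "r < p" "inj_on f {..r}" "f ` {..r} \<subseteq> deviating_rows n p Z r"
    and "card (deviating_rows n p Z r) \<le> (r + 2) * m"
  obtains c where "c (f 0) = Some (if Z (f 0) 0 = Z 0 0 then 0 else p)"
    "\<And>q. q < r \<Longrightarrow> c (f (Suc q)) = Some (Suc q)"
    "\<And>i. c i \<noteq> None \<longleftrightarrow> i \<in> deviating_rows n p Z r"
    "\<And>i q. c i = Some q \<Longrightarrow> q \<le> r \<or> q = p"
    "\<And>q. card {i. i < n \<and> c i = Some q} \<le> m"
proof -
  let ?D = "deviating_rows n p Z r" and ?Cols = "insert p {..r}"
  define \<kappa> where "\<kappa> q = (if q = 0 then (if Z (f 0) 0 = Z 0 0 then 0 else p) else q)" for q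
  define \<phi> where "\<phi> x = \<kappa> (inv_into {..r} f x)" for x
  have \<phi>_f: "\<phi> (f q) = \<kappa> q" if "q \<le> r" for q
    using assms(2) that by (simp add: \<phi>_def inv_into_f_f)
  have "inj_on \<kappa> {..r}" using assms(1) by (auto simp: \<kappa>_def inj_on_def split: if_splits)
  then have inj: "inj_on \<phi> (f ` {..r})" by (auto simp: inj_on_def \<phi>_f)
  have img: "\<phi> ` f ` {..r} \<subseteq> ?Cols" using \<phi>_f by (auto simp: \<kappa>_def)
  have "card ?D \<le> card ?Cols * m" using assms(1,4) by simp
  then obtain g where g: "g ` ?D \<subseteq> ?Cols" "\<forall>x\<in>f ` {..r}. g x = \<phi> x"
    "\<forall>c. card {x\<in>?D. g x = c} \<le> m"
    using exists_extension_with_bounded_fibres[OF finite_deviating_rows _ assms(3) inj img] by blast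
  define c where "c i = (if i \<in> ?D then Some (g i) else None)" for i
  have c_f: "c (f q) = Some (\<kappa> q)" if "q \<le> r" for q
    using assms(3) that g(2) \<phi>_f by (auto simp: c_def)
  have "card {i. i < n \<and> c i = Some q} \<le> m" for q
  proof -
    have "{i. i < n \<and> c i = Some q} = {x\<in>?D. g x = q}"
      using deviating_rows_subset[of n p Z r] by (auto simp: c_def)
    then show ?thesis using g(3) by simp
  qed
  moreover have "q \<le> r \<or> q = p" if "c i = Some q" for i q
    using that g(1) by (auto simp: c_def split: if_splits)
  ultimately show thesis
    using that[of c] c_f[of 0] c_f[of "Suc _"] by (simp add: \<kappa>_def c_def)
qed

lemma exists_shift_rows:
  assumes "r < p" "p + 1 \<le> n" "r < p - 1 \<Longrightarrow> card (deviating_rows n p Z r) \<le> r + 1"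
  obtains h where "inj_on h {r<..<p}" "h ` {r<..<p} \<subseteq> {1..<n} - deviating_rows n p Z r"
proof (cases "r < p - 1")
  case True
  let ?D = "deviating_rows n p Z r"
  have "card {r<..<p} = p - 1 - r" by simp
  also have "\<dots> \<le> card {1..<n} - card ?D" using assms(2,3) True by simp
  also have "\<dots> \<le> card ({1..<n} - ?D)" by (rule diff_card_le_card_Diff) simp
  finally show ?thesis using card_le_inj[of "{r<..<p}" "{1..<n} - ?D"] that by auto
next
  case False
  then have "{r<..<p} = {}" by auto
  then show ?thesis using that[of id] by simp
qed

lemma breakdown_plan_exists:
  assumes "1 \<le> p" "p + 1 \<le> n" "n - 1 \<le> (p + 1) * m" "deviating_rows n p Z 0 \<noteq> {}"
  obtains r f h c where "breakdown_plan n p Z r f h c" "\<And>q. card {i. i < n \<and> c i = Some q} \<le> m"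
proof -
  obtain r f where r: "r < p" and f: "inj_on f {..r}" "f 0 \<in> deviating_rows n p Z 0"
    "\<And>q. q < r \<Longrightarrow> f (Suc q) \<in> deviating_rows n p Z q"
    and card: "card (deviating_rows n p Z r) \<le> (r + 2) * m"
    "r < p - 1 \<Longrightarrow> card (deviating_rows n p Z r) \<le> r + 1"
    using exists_probe_rows[OF assms] by blast
  have "f ` {..r} \<subseteq> deviating_rows n p Z r"
  proof
    fix i assume "i \<in> f ` {..r}"
    then obtain q where "q \<le> r" "i = f q" by auto
    then show "i \<in> deviating_rows n p Z r"
      using f(2) f(3)[of "q - 1"] deviating_rows_mono[of 0 r n p Z] deviating_rows_mono[of "q - 1" r n p Z]
      by (cases q) (auto simp: subset_iff)
  qed
  then obtain c where c: "c (f 0) = Some (if Z (f 0) 0 = Z 0 0 then 0 else p)"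
    "\<And>q. q < r \<Longrightarrow> c (f (Suc q)) = Some (Suc q)"
    "\<And>i. c i \<noteq> None \<longleftrightarrow> i \<in> deviating_rows n p Z r"
    "\<And>i q. c i = Some q \<Longrightarrow> q \<le> r \<or> q = p"
    "\<And>q. card {i. i < n \<and> c i = Some q} \<le> m"
    using exists_refit_assignment[OF r f(1) _ card(1)] by blast
  obtain h where "inj_on h {r<..<p}" "h ` {r<..<p} \<subseteq> {1..<n} - deviating_rows n p Z r"
    using exists_shift_rows[OF r assms(2) card(2)] by blast
  then have "breakdown_plan n p Z r f h c"
    using r f c(1-4) by unfold_locales
  then show thesis using that c(5) by blast
qed

context breakdown_plan
begin

lemma no_refit_in_column_0:
  assumes "deviating_rows n p Z 0 = {i0}" "Z i0 0 \<noteq> Z 0 0"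
  shows "c i \<noteq> Some 0"
proof
  assume c: "c i = Some 0"
  have "r = 0"
  proof (rule ccontr)
    assume "r \<noteq> 0"
    then have "f 1 = f 0" using f_Suc[of 0] f_0 assms(1) by auto
    then show False using inj_onD[OF f_inj, of 1 0] \<open>r \<noteq> 0\<close> by auto
  qed
  then have "i = f 0" using c c_defined[of i] f_0 assms(1) by auto
  then have "c i = Some p" using c_f_0 f_0 assms by auto
  then show False using c r_less by simp
qed

lemma plan_rows_card_le:
  assumes "\<And>q. card {i. i < n \<and> c i = Some q} \<le> m" "1 \<le> m"
  shows "card ({i. i < n \<and> c i = Some q} \<union> h ` ({q} \<inter> {r<..<p})) \<le> m"
proof (cases "q \<in> {r<..<p}")
  case True
  then have "{i. i < n \<and> c i = Some q} \<union> h ` ({q} \<inter> {r<..<p}) = {h q}"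
    using c_range by fastforce
  then show ?thesis using assms(2) by simp
next
  case False
  then show ?thesis using assms(1)[of q] by simp
qed

end

lemma deviating_rows_after_shift:
  assumes "deviating_rows n p Z 0 = {}" "0 < p" "1 < n"
  defines "Z1 \<equiv> Z(1 := (Z 1)(0 := Z 1 0 + 1))"
  shows "deviating_rows n p Z1 0 = {1}" and "Z1 1 0 \<noteq> Z1 0 0"
proof -
  have "1 \<notin> deviating_rows n p Z 0" using assms(1) by simp
  then have "Z 1 0 = Z 0 0" using assms(3) unfolding deviating_rows_def by auto
  then show "deviating_rows n p Z1 0 = {1}" "Z1 1 0 \<noteq> Z1 0 0"
    using assms unfolding deviating_rows_def by auto
qed

lemma exists_plan_within_budget:
  assumes "1 \<le> p" "p + 1 \<le> n" "n - 1 \<le> (p + 1) * m"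
  obtains Z1 r f h c where "breakdown_plan n p Z1 r f h c"
    "\<And>i k. Z1 i k \<noteq> Z i k \<Longrightarrow> i < n \<and> k = 0"
    "\<And>q. card ({i. i < n \<and> Z1 i q \<noteq> Z i q} \<union> {i. i < n \<and> c i = Some q}
       \<union> h ` ({q} \<inter> {r<..<p})) \<le> m"
proof -
  have "1 \<le> m" using assms by (cases m) auto
  show thesis
  proof (cases "deviating_rows n p Z 0 = {}")
    case False
    obtain r f h c where plan: "breakdown_plan n p Z r f h c"
      and refits: "\<And>q. card {i. i < n \<and> c i = Some q} \<le> m"
      using breakdown_plan_exists[OF assms False] by blast
    show thesis
      using that[OF plan] breakdown_plan.plan_rows_card_le[OF plan refits \<open>1 \<le> m\<close>] by simp
  next
    case True
    \<comment> \<open>One cell is spent on making row 1 deviate; then no cell of the first covariate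
      needs to be refitted, so that column stays within budget.\<close>
    define Z1 where "Z1 = Z(1 := (Z 1)(0 := Z 1 0 + 1))"
    have Z1: "deviating_rows n p Z1 0 = {1}" "Z1 1 0 \<noteq> Z1 0 0"
      using deviating_rows_after_shift[OF True] assms(1,2) unfolding Z1_def by auto
    obtain r f h c where plan: "breakdown_plan n p Z1 r f h c"
      and refits: "\<And>q. card {i. i < n \<and> c i = Some q} \<le> m"
      using breakdown_plan_exists[OF assms] Z1(1) by blast
    have changed: "{i. i < n \<and> Z1 i q \<noteq> Z i q} = (if q = 0 then {1} else {})" for q
      using assms(1,2) by (auto simp: Z1_def)
    have "card ({i. i < n \<and> Z1 i q \<noteq> Z i q} \<union> {i. i < n \<and> c i = Some q}
       \<union> h ` ({q} \<inter> {r<..<p})) \<le> m" for q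
    proof (cases "q = 0")
      case True
      then have no_refit: "{i. i < n \<and> c i = Some q} = {}"
        using breakdown_plan.no_refit_in_column_0[OF plan Z1] by blast
      show ?thesis unfolding no_refit changed using True \<open>1 \<le> m\<close> by simp
    next
      case False
      then show ?thesis
        using changed breakdown_plan.plan_rows_card_le[OF plan refits \<open>1 \<le> m\<close>] by simp
    qed
    moreover have "i < n \<and> k = 0" if "Z1 i k \<noteq> Z i k" for i k
      using that assms(1,2) by (auto simp: Z1_def split: if_splits)
    ultimately show thesis using that[OF plan] by blast
  qed
qed

lemma cellwise_breaks_within_budget:
  assumes "1 \<le> p" "p + 1 \<le> n" "n - 1 \<le> (p + 1) * m" "exact_fit_property n p est"
  shows "cellwise_breaks n p est Z m"
  unfolding cellwise_breaks_def
proof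
  fix B :: real
  obtain Z1 r f h c where plan: "breakdown_plan n p Z1 r f h c"
    and preprocessed: "\<And>i k. Z1 i k \<noteq> Z i k \<Longrightarrow> i < n \<and> k = 0"
    and budget: "\<And>q. card ({i. i < n \<and> Z1 i q \<noteq> Z i q} \<union> {i. i < n \<and> c i = Some q}
       \<union> h ` ({q} \<inter> {r<..<p})) \<le> m"
    using exists_plan_within_budget[OF assms(1-3)] by blast
  define S where "S q = {i. i < n \<and> Z1 i q \<noteq> Z i q} \<union> {i. i < n \<and> c i = Some q}
    \<union> h ` ({q} \<inter> {r<..<p})" for q
  obtain Z' where cells: "\<And>i k. Z' i k \<noteq> Z1 i k \<Longrightarrow> i < n \<and> (c i = Some k \<or> k \<in> {r<..<p} \<and> i = h k)"
    and far: "B < coef_dist p (est Z') (est Z)"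
    using breakdown_plan.estimate_unbounded[OF plan assms(4)] by blast
  have "cellwise_contaminated n p m Z Z'"
  proof (rule cellwise_contaminatedI)
    show "i \<in> S j \<and> j \<le> p" if "Z' i j \<noteq> Z i j" for i j
    proof (cases "Z1 i j = Z i j")
      case True
      then have "Z' i j \<noteq> Z1 i j" using that by simp
      then have "i < n \<and> (c i = Some j \<or> j \<in> {r<..<p} \<and> i = h j)" by (rule cells)
      then show ?thesis
        using breakdown_plan.c_range[OF plan, of i j] breakdown_plan.r_less[OF plan] by (auto simp: S_def)
    next
      case False
      then show ?thesis using preprocessed[OF False] by (simp add: S_def)
    qed
    show "S j \<subseteq> {..<n}" for j using breakdown_plan.h_not_deviating[OF plan] by (auto simp: S_def)
    show "card (S j) \<le> m" for j using budget[of j] by (simp add: S_def)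
  qed
  then show "\<exists>Z'. cellwise_contaminated n p m Z Z' \<and> B < coef_dist p (est Z') (est Z)"
    using far by blast
qed

theorem proposition3:
  fixes n p :: nat
    and est :: "(nat \<Rightarrow> nat \<Rightarrow> real) \<Rightarrow> nat \<Rightarrow> real"
    and Z :: "nat \<Rightarrow> nat \<Rightarrow> real"
  assumes "1 \<le> p" and "p + 1 \<le> n"
    and "exact_fit_property n p est"
  shows "(\<exists>m. cellwise_breaks n p est Z m) \<and>
         cellwise_breakdown n p est Z \<le> of_int \<lceil>(real n - 1) / (real p + 1)\<rceil> / real n"
proof -
  define m where "m = nat \<lceil>(real n - 1) / (real p + 1)\<rceil>"
  have m: "real m = of_int \<lceil>(real n - 1) / (real p + 1)\<rceil>"
    using assms(2) unfolding m_def by simp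
  have "(real n - 1) / (real p + 1) \<le> real m" unfolding m by (rule le_of_int_ceiling)
  then have "real n - 1 \<le> (real p + 1) * real m" by (simp add: divide_le_eq mult.commute)
  then have "real (n - 1) \<le> real ((p + 1) * m)" using assms(2) by (simp add: of_nat_diff algebra_simps)
  then have "n - 1 \<le> (p + 1) * m" by (simp only: of_nat_le_iff)
  then have breaks: "cellwise_breaks n p est Z m"
    using cellwise_breaks_within_budget assms by blast
  then have "(LEAST m. cellwise_breaks n p est Z m) \<le> m" by (rule Least_le)
  then have "cellwise_breakdown n p est Z \<le> real m / real n"
    unfolding cellwise_breakdown_def by (simp add: divide_right_mono)
  then show ?thesis using breaks m by auto
qed

end
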